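(* In the logic $\mathsf{LC}$ (intuitionistic propositional logic extended with $(p\to q)\vee(q\to p)$, algebraized by Gödel algebras), the Takeuti–Titani (density) $\Pi_2$-rule $$\frac{\forall r\,\big(g\to((p\to r)\vee(r\to q)\vee c)\big)}{g\to((p\to q)\vee c)}$$ is admissible. Moreover, the uniform post-interpolant of $g\to((p\to r)\vee(r\to q)\vee c)$ with respect to $r$ (i.e. the formula $\forall_r$ of it, a formula in $g,p,q,c$ that is the strongest consequence-free-of-$r$ from below: for any $\Sigma$ not containing $r$, $\Sigma\vdash$ the formula iff $\Sigma\vdash$ the interpolant) is equivalent in $\mathsf{LC}$ to $g\to((p\to q)\vee c)$.
   Context: A $\Pi_2$-rule $\forall\overline p\,\Gamma/^2\phi$ (with $\phi$ not containing $\overline p$) is admissible over a logic $\vdash$ iff for every substitution $\sigma$ which fixes each variable of $\overline p$ and maps every other variable to a formula not containing variables of $\overline p$, $\vdash\sigma(\Gamma)$ implies $\vdash\sigma(\phi)$. Here $g,p,q,c,r$ are distinct propositional variables. *)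

theory Defs
  imports Main
begin

datatype fm = Var nat | Bot | And fm fm | Or fm fm | Imp fm fm

primrec vars :: "fm \<Rightarrow> nat set" where
  "vars (Var v) = {v}"
| "vars Bot = {}"
| "vars (And a b) = vars a \<union> vars b"
| "vars (Or a b) = vars a \<union> vars b"
| "vars (Imp a b) = vars a \<union> vars b"

primrec subst :: "(nat \<Rightarrow> fm) \<Rightarrow> fm \<Rightarrow> fm" where
  "subst s (Var v) = s v"
| "subst s Bot = Bot"
| "subst s (And a b) = And (subst s a) (subst s b)"
| "subst s (Or a b) = Or (subst s a) (subst s b)"
| "subst s (Imp a b) = Imp (subst s a) (subst s b)"

inductive lc_axiom :: "fm \<Rightarrow> bool" where
  ax_K:  "lc_axiom (Imp a (Imp b a))"
| ax_S:  "lc_axiom (Imp (Imp a (Imp b c)) (Imp (Imp a b) (Imp a c)))"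
| ax_C1: "lc_axiom (Imp (And a b) a)"
| ax_C2: "lc_axiom (Imp (And a b) b)"
| ax_CI: "lc_axiom (Imp a (Imp b (And a b)))"
| ax_D1: "lc_axiom (Imp a (Or a b))"
| ax_D2: "lc_axiom (Imp b (Or a b))"
| ax_DE: "lc_axiom (Imp (Imp a c) (Imp (Imp b c) (Imp (Or a b) c)))"
| ax_EF: "lc_axiom (Imp Bot a)"
| ax_LIN: "lc_axiom (Or (Imp a b) (Imp b a))"

inductive lc_derives :: "fm set \<Rightarrow> fm \<Rightarrow> bool" (infix "\<turnstile>\<^sub>L\<^sub>C" 50) where
  hyp: "a \<in> \<Gamma> \<Longrightarrow> \<Gamma> \<turnstile>\<^sub>L\<^sub>C a"
| ax:  "lc_axiom a \<Longrightarrow> \<Gamma> \<turnstile>\<^sub>L\<^sub>C a"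
| mp:  "\<Gamma> \<turnstile>\<^sub>L\<^sub>C Imp a b \<Longrightarrow> \<Gamma> \<turnstile>\<^sub>L\<^sub>C a \<Longrightarrow> \<Gamma> \<turnstile>\<^sub>L\<^sub>C b"

abbreviation lc_thm :: "fm \<Rightarrow> bool" ("\<turnstile>\<^sub>L\<^sub>C _" [50] 50) where
  "\<turnstile>\<^sub>L\<^sub>C a \<equiv> {} \<turnstile>\<^sub>L\<^sub>C a"

definition pi2_admissible :: "nat \<Rightarrow> fm list \<Rightarrow> fm \<Rightarrow> bool" where
  "pi2_admissible r \<Gamma> \<phi> \<longleftrightarrow>
     (\<forall>\<sigma>. \<sigma> r = Var r \<and> (\<forall>v. v \<noteq> r \<longrightarrow> r \<notin> vars (\<sigma> v)) \<longrightarrow>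
        (\<forall>\<gamma>\<in>set \<Gamma>. \<turnstile>\<^sub>L\<^sub>C subst \<sigma> \<gamma>) \<longrightarrow> \<turnstile>\<^sub>L\<^sub>C subst \<sigma> \<phi>)"

definition uniform_post_interpolant :: "nat \<Rightarrow> fm \<Rightarrow> fm \<Rightarrow> bool" where
  "uniform_post_interpolant r \<phi> \<psi> \<longleftrightarrow>
     r \<notin> vars \<psi> \<and>
     (\<forall>\<Sigma>. (\<forall>s\<in>\<Sigma>. r \<notin> vars s) \<longrightarrow> (\<Sigma> \<turnstile>\<^sub>L\<^sub>C \<phi> \<longleftrightarrow> \<Sigma> \<turnstile>\<^sub>L\<^sub>C \<psi>))"

definition lc_equiv :: "fm \<Rightarrow> fm \<Rightarrow> bool" where
  "lc_equiv a b \<longleftrightarrow> \<turnstile>\<^sub>L\<^sub>C Imp a b \<and> \<turnstile>\<^sub>L\<^sub>C Imp b a"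

end

theory Submission
  imports Defs
begin

text \<open>LC is complete for linearly ordered Goedel algebras (Goedel chains), which we obtain
  from prime theories. Suppose \<open>\<Sigma> \<turnstile>\<^sub>L\<^sub>C g \<rightarrow> ((p \<rightarrow> q) \<or> c)\<close> fails for an \<open>r\<close>-free \<open>\<Sigma>\<close>, and take a
  countermodel. There \<open>q < p\<close>, \<open>q < g\<close> and \<open>c < g\<close>. Refine the chain by doubling it lexicographically
  with a fresh point immediately above \<open>q\<close> and interpret \<open>r\<close> by that point: nothing \<open>r\<close>-free changes
  its value, while \<open>p \<rightarrow> r\<close> takes the new point and \<open>r \<rightarrow> q\<close> the value of \<open>q\<close>, both below \<open>g\<close>. So
  \<open>g \<rightarrow> ((p \<rightarrow> r) \<or> (r \<rightarrow> q) \<or> c)\<close> is refuted too, which gives the admissibility of the rule.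
  Conversely \<open>p \<rightarrow> q\<close> entails \<open>(p \<rightarrow> r) \<or> (r \<rightarrow> q)\<close> by linearity, so the conclusion of the rule is
  itself the uniform post-interpolant of its premise.\<close>

lemma lc_derives_mono: "\<Gamma> \<turnstile>\<^sub>L\<^sub>C a \<Longrightarrow> \<Gamma> \<subseteq> \<Delta> \<Longrightarrow> \<Delta> \<turnstile>\<^sub>L\<^sub>C a"
  by (induction rule: lc_derives.induct) (auto intro: lc_derives.intros)

lemma lc_imp_refl: "\<Gamma> \<turnstile>\<^sub>L\<^sub>C Imp a a"
proof -
  have "\<Gamma> \<turnstile>\<^sub>L\<^sub>C Imp (Imp a (Imp (Imp a a) a)) (Imp (Imp a (Imp a a)) (Imp a a))"
    by (rule ax, rule ax_S)
  moreover have "\<Gamma> \<turnstile>\<^sub>L\<^sub>C Imp a (Imp (Imp a a) a)" "\<Gamma> \<turnstile>\<^sub>L\<^sub>C Imp a (Imp a a)"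
    by (rule ax, rule ax_K)+
  ultimately show ?thesis by (blast intro: mp)
qed

lemma lc_deduction: "insert a \<Gamma> \<turnstile>\<^sub>L\<^sub>C b \<Longrightarrow> \<Gamma> \<turnstile>\<^sub>L\<^sub>C Imp a b"
proof (induction "insert a \<Gamma>" b rule: lc_derives.induct)
  case (hyp b)
  then show ?case
    using lc_imp_refl lc_derives.hyp mp[OF ax[OF ax_K]] by blast
next
  case (ax b)
  then show ?case
    using lc_derives.ax mp[OF lc_derives.ax[OF ax_K]] by blast
next
  case (mp b c)
  then show ?case
    using lc_derives.mp[OF lc_derives.mp[OF lc_derives.ax[OF ax_S]]] by blast
qed

lemma lc_deduction_iff: "\<Gamma> \<turnstile>\<^sub>L\<^sub>C Imp a b \<longleftrightarrow> insert a \<Gamma> \<turnstile>\<^sub>L\<^sub>C b"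
proof
  assume "\<Gamma> \<turnstile>\<^sub>L\<^sub>C Imp a b"
  then have "insert a \<Gamma> \<turnstile>\<^sub>L\<^sub>C Imp a b" by (rule lc_derives_mono) blast
  then show "insert a \<Gamma> \<turnstile>\<^sub>L\<^sub>C b" by (rule mp) (simp add: hyp)
qed (rule lc_deduction)

lemma lc_cut: "\<Gamma> \<turnstile>\<^sub>L\<^sub>C a \<Longrightarrow> insert a \<Gamma> \<turnstile>\<^sub>L\<^sub>C b \<Longrightarrow> \<Gamma> \<turnstile>\<^sub>L\<^sub>C b"
  using lc_deduction mp by blast

lemma lc_imp_trans: "\<Gamma> \<turnstile>\<^sub>L\<^sub>C Imp a b \<Longrightarrow> \<Gamma> \<turnstile>\<^sub>L\<^sub>C Imp b c \<Longrightarrow> \<Gamma> \<turnstile>\<^sub>L\<^sub>C Imp a c"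
  by (meson lc_deduction_iff mp lc_derives_mono subset_insertI)

lemma lc_derives_finite: "\<Gamma> \<turnstile>\<^sub>L\<^sub>C a \<Longrightarrow> \<exists>\<Gamma>\<^sub>0. finite \<Gamma>\<^sub>0 \<and> \<Gamma>\<^sub>0 \<subseteq> \<Gamma> \<and> \<Gamma>\<^sub>0 \<turnstile>\<^sub>L\<^sub>C a"
proof (induction rule: lc_derives.induct)
  case (hyp a \<Gamma>)
  then show ?case by (intro exI[of _ "{a}"]) (auto intro: lc_derives.hyp)
next
  case (ax a \<Gamma>)
  then show ?case by (intro exI[of _ "{}"]) (auto intro: lc_derives.ax)
next
  case (mp \<Gamma> a b)
  then obtain A B where "finite A" "A \<subseteq> \<Gamma>" "A \<turnstile>\<^sub>L\<^sub>C Imp a b" "finite B" "B \<subseteq> \<Gamma>" "B \<turnstile>\<^sub>L\<^sub>C a"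
    by blast
  then show ?case
    by (intro exI[of _ "A \<union> B"]) (meson lc_derives.mp lc_derives_mono finite_UnI Un_upper1 Un_upper2 Un_least)
qed

section \<open>Goedel chains\<close>

primrec eval :: "('a \<Rightarrow> 'a \<Rightarrow> bool) \<Rightarrow> 'a \<Rightarrow> 'a \<Rightarrow> (nat \<Rightarrow> 'a) \<Rightarrow> fm \<Rightarrow> 'a" where
  "eval le bt tp V (Var v) = V v"
| "eval le bt tp V Bot = bt"
| "eval le bt tp V (And a b) =
     (if le (eval le bt tp V a) (eval le bt tp V b) then eval le bt tp V a else eval le bt tp V b)"
| "eval le bt tp V (Or a b) =
     (if le (eval le bt tp V a) (eval le bt tp V b) then eval le bt tp V b else eval le bt tp V a)"
| "eval le bt tp V (Imp a b) =
     (if le (eval le bt tp V a) (eval le bt tp V b) then tp else eval le bt tp V b)"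

locale chain_model =
  fixes le :: "'a \<Rightarrow> 'a \<Rightarrow> bool" and S :: "'a set" and bt tp :: 'a and V :: "nat \<Rightarrow> 'a"
  assumes total: "x \<in> S \<Longrightarrow> y \<in> S \<Longrightarrow> le x y \<or> le y x"
    and antisym: "x \<in> S \<Longrightarrow> y \<in> S \<Longrightarrow> le x y \<Longrightarrow> le y x \<Longrightarrow> x = y"
    and trans: "x \<in> S \<Longrightarrow> y \<in> S \<Longrightarrow> z \<in> S \<Longrightarrow> le x y \<Longrightarrow> le y z \<Longrightarrow> le x z"
    and bt_in: "bt \<in> S" and tp_in: "tp \<in> S" and V_in: "V v \<in> S"
    and bt_le: "x \<in> S \<Longrightarrow> le bt x" and le_tp: "x \<in> S \<Longrightarrow> le x tp"
begin

abbreviation E :: "fm \<Rightarrow> 'a" where "E \<equiv> eval le bt tp V"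

lemma refl: "x \<in> S \<Longrightarrow> le x x"
  using total by blast

lemma eval_in: "E a \<in> S"
  by (induction a) (auto simp: bt_in tp_in V_in)

lemma eval_Imp_eq_tp: "E (Imp a b) = tp \<longleftrightarrow> le (E a) (E b)"
  using antisym[OF eval_in[of b] tp_in] le_tp[OF eval_in[of a]] le_tp[OF eval_in[of b]] by auto

lemma eval_Or_upper: "le (E a) (E (Or a b)) \<and> le (E b) (E (Or a b))"
  using total[OF eval_in[of a] eval_in[of b]] refl[OF eval_in[of a]] refl[OF eval_in[of b]] by auto

lemma lc_axiom_sound: "lc_axiom a \<Longrightarrow> E a = tp"
  by (induction rule: lc_axiom.induct)
    (use eval_in tp_in in \<open>simp only: eval.simps; smt (verit) antisym le_tp bt_le refl trans total\<close>)+

lemma lc_sound: "\<Gamma> \<turnstile>\<^sub>L\<^sub>C a \<Longrightarrow> \<forall>\<gamma>\<in>\<Gamma>. E \<gamma> = tp \<Longrightarrow> E a = tp"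
proof (induction rule: lc_derives.induct)
  case (mp \<Gamma> a b)
  then show ?case using eval_Imp_eq_tp[of a b] eval_in[of b] le_tp antisym tp_in by metis
qed (auto simp: lc_axiom_sound)

end

section \<open>Completeness\<close>

locale prime_theory =
  fixes P :: "fm set"
  assumes closed: "P \<turnstile>\<^sub>L\<^sub>C a \<Longrightarrow> a \<in> P"
    and prime: "Or a b \<in> P \<Longrightarrow> a \<in> P \<or> b \<in> P"

lemma lc_prime_extension:
  assumes "\<not> \<Sigma> \<turnstile>\<^sub>L\<^sub>C \<psi>"
  obtains P where "\<Sigma> \<subseteq> P" "\<not> P \<turnstile>\<^sub>L\<^sub>C \<psi>" "prime_theory P"
proof -
  let ?A = "{\<Gamma>. \<Sigma> \<subseteq> \<Gamma> \<and> \<not> \<Gamma> \<turnstile>\<^sub>L\<^sub>C \<psi>}"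
  have "\<exists>M\<in>?A. \<forall>X\<in>?A. M \<subseteq> X \<longrightarrow> X = M"
  proof (rule subset_Zorn_nonempty)
    fix C assume C: "C \<noteq> {}" "subset.chain ?A C"
    have "\<not> \<Union>C \<turnstile>\<^sub>L\<^sub>C \<psi>"
    proof
      assume "\<Union>C \<turnstile>\<^sub>L\<^sub>C \<psi>"
      then obtain G where G: "finite G" "G \<subseteq> \<Union>C" "G \<turnstile>\<^sub>L\<^sub>C \<psi>"
        using lc_derives_finite by blast
      then obtain B where "B \<in> C" "G \<subseteq> B"
        using finite_subset_Union_chain[OF G(1,2) C] by blast
      then show False
        using C(2) lc_derives_mono[OF G(3)] unfolding subset_chain_def by blast
    qed
    moreover have "\<Sigma> \<subseteq> \<Union>C"
      using C unfolding subset_chain_def by blast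
    ultimately show "\<Union>C \<in> ?A" by blast
  qed (use assms in blast)
  then obtain M where M: "\<Sigma> \<subseteq> M" "\<not> M \<turnstile>\<^sub>L\<^sub>C \<psi>"
    and maximal: "\<And>X. \<Sigma> \<subseteq> X \<Longrightarrow> \<not> X \<turnstile>\<^sub>L\<^sub>C \<psi> \<Longrightarrow> M \<subseteq> X \<Longrightarrow> X = M"
    by auto
  have insert_refutes: "insert a M \<turnstile>\<^sub>L\<^sub>C \<psi>" if "a \<notin> M" for a
    using maximal[of "insert a M"] M(1) that by blast
  have "prime_theory M"
  proof
    fix a assume "M \<turnstile>\<^sub>L\<^sub>C a"
    then show "a \<in> M" using lc_cut insert_refutes M(2) by blast
  next
    fix a b assume ab: "Or a b \<in> M"
    show "a \<in> M \<or> b \<in> M"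
    proof (rule ccontr)
      assume "\<not> (a \<in> M \<or> b \<in> M)"
      then have "M \<turnstile>\<^sub>L\<^sub>C Imp a \<psi>" "M \<turnstile>\<^sub>L\<^sub>C Imp b \<psi>"
        using insert_refutes lc_deduction by blast+
      then have "M \<turnstile>\<^sub>L\<^sub>C \<psi>"
        using mp[OF mp[OF mp[OF ax[OF ax_DE[of a \<psi> b]]]] hyp[OF ab]] by blast
      with M(2) show False by blast
    qed
  qed
  with M that show ?thesis by blast
qed

context prime_theory
begin

text \<open>The canonical chain: \<open>a\<close> is represented by its down-set in the preorder
  \<open>x \<preceq> a \<longleftrightarrow> x \<rightarrow> a \<in> P\<close>, which is total because \<open>P\<close> is prime and contains the linearity axiom.\<close>

definition down :: "fm \<Rightarrow> fm set" where
  "down a = {x. Imp x a \<in> P}"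

lemma mem_iff_derives: "a \<in> P \<longleftrightarrow> P \<turnstile>\<^sub>L\<^sub>C a"
  using closed hyp by blast

lemma down_subset_iff: "down a \<subseteq> down b \<longleftrightarrow> Imp a b \<in> P"
proof
  assume "down a \<subseteq> down b"
  moreover have "a \<in> down a" unfolding down_def using lc_imp_refl mem_iff_derives by blast
  ultimately show "Imp a b \<in> P" unfolding down_def by blast
next
  assume "Imp a b \<in> P"
  then show "down a \<subseteq> down b" unfolding down_def using lc_imp_trans mem_iff_derives by blast
qed

lemma down_total: "down a \<subseteq> down b \<or> down b \<subseteq> down a"
proof -
  have "Or (Imp a b) (Imp b a) \<in> P" using mem_iff_derives ax ax_LIN by blast
  then show ?thesis using prime down_subset_iff by blast
qed

lemma down_eq_UNIV_iff: "down a = UNIV \<longleftrightarrow> a \<in> P"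
proof
  assume "down a = UNIV"
  then have "Imp (Imp Bot Bot) a \<in> P" unfolding down_def by blast
  then show "a \<in> P" using mem_iff_derives mp lc_imp_refl by blast
next
  assume "a \<in> P"
  then show "down a = UNIV" unfolding down_def using mem_iff_derives mp ax[OF ax_K] by blast
qed

lemma chain_model_down: "chain_model (\<subseteq>) (range down) (down Bot) UNIV (\<lambda>v. down (Var v))"
proof
  fix x assume "x \<in> range down"
  then obtain a where "x = down a" by blast
  then show "down Bot \<subseteq> x"
    using down_subset_iff mem_iff_derives ax[OF ax_EF] by blast
next
  fix x y assume "x \<in> range down" "y \<in> range down"
  then show "x \<subseteq> y \<or> y \<subseteq> x" using down_total by blast
next
  have "down (Imp Bot Bot) = UNIV" using down_eq_UNIV_iff mem_iff_derives lc_imp_refl by blast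
  then show "UNIV \<in> range down" by (metis rangeI)
qed auto

lemma down_And: "down (And a b) = down a \<inter> down b"
proof -
  have "insert x P \<turnstile>\<^sub>L\<^sub>C And a b \<longleftrightarrow> insert x P \<turnstile>\<^sub>L\<^sub>C a \<and> insert x P \<turnstile>\<^sub>L\<^sub>C b" for x
    by (meson mp ax ax_C1 ax_C2 ax_CI)
  then show ?thesis unfolding down_def by (auto simp add: mem_iff_derives lc_deduction_iff)
qed

lemma down_Or: "down (Or a b) = (if down a \<subseteq> down b then down b else down a)"
proof -
  have upper: "down a \<subseteq> down (Or a b)" "down b \<subseteq> down (Or a b)"
    using down_subset_iff mem_iff_derives ax[OF ax_D1[of a b]] ax[OF ax_D2[of b a]] by auto
  have least: "down (Or a b) \<subseteq> down c" if "down a \<subseteq> down c" "down b \<subseteq> down c" for c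
  proof -
    have "P \<turnstile>\<^sub>L\<^sub>C Imp a c" "P \<turnstile>\<^sub>L\<^sub>C Imp b c"
      using that down_subset_iff mem_iff_derives by auto
    then have "P \<turnstile>\<^sub>L\<^sub>C Imp (Or a b) c" using mp[OF mp[OF ax[OF ax_DE[of a c b]]]] by blast
    then show ?thesis using down_subset_iff mem_iff_derives by auto
  qed
  show ?thesis
    using upper least[of a] least[of b] down_total[of a b] by auto
qed

lemma down_Imp: "down (Imp a b) = (if down a \<subseteq> down b then UNIV else down b)"
proof (cases "down a \<subseteq> down b")
  case True
  then show ?thesis using down_subset_iff down_eq_UNIV_iff by simp
next
  case False
  then have not_ab: "Imp a b \<notin> P" using down_subset_iff by blast
  have "Imp a (Imp a b) \<notin> P"
  proof
    assume "Imp a (Imp a b) \<in> P"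
    then have "insert a P \<turnstile>\<^sub>L\<^sub>C b"
      using mem_iff_derives lc_deduction_iff mp hyp[of a "insert a P"] by blast
    then show False using not_ab mem_iff_derives lc_deduction by blast
  qed
  \<comment> \<open>so linearity forces \<open>(a \<rightarrow> b) \<rightarrow> a\<close>, whence \<open>(a \<rightarrow> b) \<rightarrow> b\<close>\<close>
  moreover have "Or (Imp a (Imp a b)) (Imp (Imp a b) a) \<in> P"
    using mem_iff_derives ax[OF ax_LIN] by blast
  ultimately have "P \<turnstile>\<^sub>L\<^sub>C Imp (Imp a b) a" using prime mem_iff_derives by blast
  then have "P \<turnstile>\<^sub>L\<^sub>C Imp (Imp a b) b"
    using mp[OF mp[OF ax[OF ax_S[of "Imp a b" a b]]]] lc_imp_refl by blast
  moreover have "P \<turnstile>\<^sub>L\<^sub>C Imp b (Imp a b)" using ax[OF ax_K] .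
  ultimately show ?thesis
    using False down_subset_iff mem_iff_derives by (simp add: subset_antisym)
qed

lemma eval_down: "eval (\<subseteq>) (down Bot) UNIV (\<lambda>v. down (Var v)) a = down a"
proof (induction a)
  case (And a b)
  then show ?case using down_And down_total[of a b] by auto
qed (simp_all add: down_Or down_Imp)

end

lemma lc_countermodel:
  assumes "\<not> \<Sigma> \<turnstile>\<^sub>L\<^sub>C \<psi>"
  obtains S bt and V :: "nat \<Rightarrow> fm set" where "chain_model (\<subseteq>) S bt UNIV V"
    "\<forall>s\<in>\<Sigma>. eval (\<subseteq>) bt UNIV V s = UNIV" "eval (\<subseteq>) bt UNIV V \<psi> \<noteq> UNIV"
proof -
  obtain P where P: "\<Sigma> \<subseteq> P" "\<not> P \<turnstile>\<^sub>L\<^sub>C \<psi>" "prime_theory P"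
    using lc_prime_extension[OF assms] .
  interpret prime_theory P by (rule P(3))
  show ?thesis
    using that[OF chain_model_down] P(1,2) down_eq_UNIV_iff mem_iff_derives
    by (auto simp: eval_down)
qed

section \<open>Adjoining a point to a Goedel chain\<close>

definition lex_le :: "('a \<Rightarrow> 'a \<Rightarrow> bool) \<Rightarrow> 'a \<times> bool \<Rightarrow> 'a \<times> bool \<Rightarrow> bool" where
  "lex_le le u w \<longleftrightarrow> (le (fst u) (fst w) \<and> fst u \<noteq> fst w) \<or> (fst u = fst w \<and> (snd u \<longrightarrow> snd w))"

context chain_model
begin

text \<open>Inside the lexicographic order on \<open>S \<times> bool\<close>, the chain \<open>S\<close> sits as \<open>S \<times> {False}\<close> and
  \<open>(w, True)\<close> is a new point immediately above \<open>w\<close>; the variable \<open>r\<close> is sent to it.\<close>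

definition chain_above :: "'a \<Rightarrow> ('a \<times> bool) set" where
  "chain_above w = insert (w, True) ((\<lambda>x. (x, False)) ` S)"

definition valuation_above :: "nat \<Rightarrow> 'a \<Rightarrow> nat \<Rightarrow> 'a \<times> bool" where
  "valuation_above r w v = (if v = r then (w, True) else (V v, False))"

lemma fst_chain_above: "w \<in> S \<Longrightarrow> u \<in> chain_above w \<Longrightarrow> fst u \<in> S"
  unfolding chain_above_def by auto

lemma lex_le_antisym: "fst x \<in> S \<Longrightarrow> fst y \<in> S \<Longrightarrow> lex_le le x y \<Longrightarrow> lex_le le y x \<Longrightarrow> x = y"
  unfolding lex_le_def using antisym by (auto intro: prod_eqI)

lemma lex_le_trans:
  assumes "fst x \<in> S" "fst y \<in> S" "fst z \<in> S" "lex_le le x y" "lex_le le y z"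
  shows "lex_le le x z"
  using assms antisym[OF assms(1,2)] antisym[OF assms(2,3)] trans[OF assms(1-3)]
  unfolding lex_le_def by metis

lemma chain_model_above:
  assumes w: "w \<in> S" "w \<noteq> tp"
  shows "chain_model (lex_le le) (chain_above w) (bt, False) (tp, False) (valuation_above r w)"
proof
  fix x y assume "x \<in> chain_above w" "y \<in> chain_above w"
  then have "le (fst x) (fst y) \<or> le (fst y) (fst x)" using fst_chain_above w total by blast
  then show "lex_le le x y \<or> lex_le le y x" unfolding lex_le_def by auto
next
  fix x y assume "x \<in> chain_above w" "y \<in> chain_above w" "lex_le le x y" "lex_le le y x"
  then show "x = y" by (intro lex_le_antisym fst_chain_above[OF w(1)])
next
  fix x y z assume "x \<in> chain_above w" "y \<in> chain_above w" "z \<in> chain_above w"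
    "lex_le le x y" "lex_le le y z"
  then show "lex_le le x z" by (intro lex_le_trans[of x y z] fst_chain_above[OF w(1)])
next
  fix x assume x: "x \<in> chain_above w"
  then have "fst x \<in> S" using fst_chain_above w by blast
  then show "lex_le le (bt, False) x" unfolding lex_le_def using bt_le by auto
  have "fst x = tp \<Longrightarrow> snd x = False" using x w unfolding chain_above_def by auto
  then show "lex_le le x (tp, False)" unfolding lex_le_def using le_tp \<open>fst x \<in> S\<close> by auto
qed (use bt_in tp_in V_in w in \<open>auto simp: chain_above_def valuation_above_def\<close>)

lemma eval_above_fresh:
  "w \<in> S \<Longrightarrow> r \<notin> vars a \<Longrightarrow> eval (lex_le le) (bt, False) (tp, False) (valuation_above r w) a = (E a, False)"
  by (induction a) (auto simp: valuation_above_def lex_le_def eval_in refl)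

end

section \<open>The density rule\<close>

context chain_model
begin

lemma density_countermodel:
  assumes fresh: "r \<notin> vars G" "r \<notin> vars P" "r \<notin> vars Q" "r \<notin> vars C"
    and refuted: "E (Imp G (Or (Imp P Q) C)) \<noteq> tp"
  shows "E Q \<noteq> tp"
    and "eval (lex_le le) (bt, False) (tp, False) (valuation_above r (E Q))
           (Imp G (Or (Or (Imp P (Var r)) (Imp (Var r) Q)) C)) \<noteq> (tp, False)"
proof -
  have in_S: "E G \<in> S" "E P \<in> S" "E Q \<in> S" "E C \<in> S" using eval_in by auto
  have "\<not> le (E G) (E (Or (Imp P Q) C))" using refuted eval_Imp_eq_tp by blast
  then have CG: "\<not> le (E G) (E C)" and PQ_G: "\<not> le (E G) (E (Imp P Q))"
    using eval_Or_upper[of "Imp P Q" C] trans[OF eval_in eval_in eval_in] by metis+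
  then have QP: "\<not> le (E P) (E Q)" using le_tp in_S by auto
  with PQ_G have QG: "\<not> le (E G) (E Q)" by simp
  from QP show "E Q \<noteq> tp" using le_tp in_S by auto
  let ?E = "eval (lex_le le) (bt, False) (tp, False) (valuation_above r (E Q))"
  have "?E G = (E G, False)" "?E P = (E P, False)" "?E Q = (E Q, False)" "?E C = (E C, False)"
    using eval_above_fresh[OF in_S(3)] fresh by auto
  moreover have "?E (Var r) = (E Q, True)" by (simp add: valuation_above_def)
  moreover have "\<not> lex_le le (E P, False) (E Q, True)" "\<not> lex_le le (E Q, True) (E Q, False)"
    "\<not> lex_le le (E G, False) (E Q, True)" "\<not> lex_le le (E G, False) (E C, False)"
    using QP QG CG refl in_S unfolding lex_le_def by auto
  ultimately show "?E (Imp G (Or (Or (Imp P (Var r)) (Imp (Var r) Q)) C)) \<noteq> (tp, False)"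
    using \<open>E Q \<noteq> tp\<close> CG le_tp in_S by auto
qed

lemma eval_Imp_le_Or_Imp_Imp: "le (E (Imp P Q)) (E (Or (Imp P R) (Imp R Q)))"
  using eval_in tp_in by (simp only: eval.simps) (smt (verit) antisym le_tp refl trans total)

lemma eval_weaken_disjunct:
  assumes "le (E A) (E B)" and "E (Imp G (Or A C)) = tp"
  shows "E (Imp G (Or B C)) = tp"
  using assms eval_in eval_Imp_eq_tp
  by (simp only: eval.simps) (smt (verit) antisym le_tp refl trans total)

end

lemma lc_density_rule:
  assumes fresh: "r \<notin> vars G" "r \<notin> vars P" "r \<notin> vars Q" "r \<notin> vars C"
    and fresh_\<Sigma>: "\<forall>s\<in>\<Sigma>. r \<notin> vars s"
    and premise: "\<Sigma> \<turnstile>\<^sub>L\<^sub>C Imp G (Or (Or (Imp P (Var r)) (Imp (Var r) Q)) C)"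
  shows "\<Sigma> \<turnstile>\<^sub>L\<^sub>C Imp G (Or (Imp P Q) C)"
proof (rule ccontr)
  assume "\<not> \<Sigma> \<turnstile>\<^sub>L\<^sub>C Imp G (Or (Imp P Q) C)"
  then obtain S bt and V :: "nat \<Rightarrow> fm set" where
    chain: "chain_model (\<subseteq>) S bt UNIV V" and \<Sigma>_true: "\<forall>s\<in>\<Sigma>. eval (\<subseteq>) bt UNIV V s = UNIV"
    and refuted: "eval (\<subseteq>) bt UNIV V (Imp G (Or (Imp P Q) C)) \<noteq> UNIV"
    by (rule lc_countermodel)
  interpret chain_model "(\<subseteq>)" S bt UNIV V by (rule chain)
  let ?w = "E Q"
  have "?w \<noteq> UNIV" using density_countermodel(1)[OF fresh refuted] .
  then interpret above: chain_model "lex_le (\<subseteq>)" "chain_above ?w" "(bt, False)" "(UNIV, False)"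
    "valuation_above r ?w"
    by (intro chain_model_above eval_in)
  have "\<forall>s\<in>\<Sigma>. above.E s = (UNIV, False)"
    using \<Sigma>_true fresh_\<Sigma> eval_above_fresh[OF eval_in] by auto
  then have "above.E (Imp G (Or (Or (Imp P (Var r)) (Imp (Var r) Q)) C)) = (UNIV, False)"
    by (rule above.lc_sound[OF premise])
  then show False using density_countermodel(2)[OF fresh refuted] by blast
qed

lemma lc_density_rule_converse:
  assumes "\<Sigma> \<turnstile>\<^sub>L\<^sub>C Imp G (Or (Imp P Q) C)"
  shows "\<Sigma> \<turnstile>\<^sub>L\<^sub>C Imp G (Or (Or (Imp P R) (Imp R Q)) C)"
proof (rule ccontr)
  assume "\<not> \<Sigma> \<turnstile>\<^sub>L\<^sub>C Imp G (Or (Or (Imp P R) (Imp R Q)) C)"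
  then obtain S bt and V :: "nat \<Rightarrow> fm set" where
    chain: "chain_model (\<subseteq>) S bt UNIV V" and \<Sigma>_true: "\<forall>s\<in>\<Sigma>. eval (\<subseteq>) bt UNIV V s = UNIV"
    and refuted: "eval (\<subseteq>) bt UNIV V (Imp G (Or (Or (Imp P R) (Imp R Q)) C)) \<noteq> UNIV"
    by (rule lc_countermodel)
  interpret chain_model "(\<subseteq>)" S bt UNIV V by (rule chain)
  have "E (Imp G (Or (Imp P Q) C)) = UNIV" by (rule lc_sound[OF assms \<Sigma>_true])
  with refuted show False using eval_weaken_disjunct[OF eval_Imp_le_Or_Imp_Imp] by blast
qed

theorem mainTheorem11:
  fixes g p q c r :: nat
  assumes "distinct [g, p, q, c, r]"
  shows "pi2_admissible r
           [Imp (Var g) (Or (Or (Imp (Var p) (Var r)) (Imp (Var r) (Var q))) (Var c))]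
           (Imp (Var g) (Or (Imp (Var p) (Var q)) (Var c)))
       \<and> (\<exists>\<psi>. uniform_post_interpolant r
                (Imp (Var g) (Or (Or (Imp (Var p) (Var r)) (Imp (Var r) (Var q))) (Var c))) \<psi>
             \<and> lc_equiv \<psi> (Imp (Var g) (Or (Imp (Var p) (Var q)) (Var c))))"
proof -
  let ?premise = "Imp (Var g) (Or (Or (Imp (Var p) (Var r)) (Imp (Var r) (Var q))) (Var c))"
  let ?conclusion = "Imp (Var g) (Or (Imp (Var p) (Var q)) (Var c))"
  have "pi2_admissible r [?premise] ?conclusion"
    unfolding pi2_admissible_def
  proof (intro allI impI)
    fix \<sigma> assume "\<sigma> r = Var r \<and> (\<forall>v. v \<noteq> r \<longrightarrow> r \<notin> vars (\<sigma> v))"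
      and "\<forall>\<gamma>\<in>set [?premise]. \<turnstile>\<^sub>L\<^sub>C subst \<sigma> \<gamma>"
    then show "\<turnstile>\<^sub>L\<^sub>C subst \<sigma> ?conclusion"
      using lc_density_rule[of r "\<sigma> g" "\<sigma> p" "\<sigma> q" "\<sigma> c" "{}"] assms by auto
  qed
  moreover have "uniform_post_interpolant r ?premise ?conclusion"
    unfolding uniform_post_interpolant_def
    using assms lc_density_rule[of r "Var g" "Var p" "Var q" "Var c"] lc_density_rule_converse
    by auto
  moreover have "lc_equiv ?conclusion ?conclusion"
    unfolding lc_equiv_def using lc_imp_refl by blast
  ultimately show ?thesis by blast
qed

end
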